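(* Let $B$ be a real number with $1\le B<\infty$ and $\varepsilon=2^{-B}$. Let $n\ge1$, $x^n\in\mathcal{X}^n$, and $\mathbf{P}^n=\mathbf{P}_1,\dots,\mathbf{P}_n$ a sequence of probability matrices over $\mathcal{P}_\varepsilon$ (with $m$ models; write $p_{k,i}$ for the $i$-th model distribution of $\mathbf{P}_k$). For $1\le k\le l\le n$ let $\ell^*(k,l,\textsc{best}):=\min_{1\le i\le m}\sum_{j=k}^l-\log_2p_{j,i}(x_j)$. Minima below range over all $1\le s\le n$ and integers $t_1=1<t_2<\dots<t_s<t_{s+1}=n+1$. Then for every $\mathbf{w}_1\in\mathcal{S}$, Algorithm $\textsc{mix-ogd}$ with parameter space $\mathcal{W}=\mathcal{S}$ satisfies, writing $L:=\ell(x^n,\textsc{mix-ogd}(\mathbf{w}_1,\alpha,x^n,\mathbf{P}^n))$: 1. for $\textsc{mix}=\textsc{lin}$ and $\alpha=\frac{8B}{17m4^B}$: $L\le\min_{s,t_2,\dots,t_s}\big[2\sum_{i=1}^s\ell^*(t_i,t_{i+1}-1,\textsc{best})+\frac{17ms4^B}{4B}\big]$; 2. for $\textsc{mix}=\textsc{lin}$ and $\alpha=\frac{8B/\sqrt n}{17m4^B}$: $L\le\min_{s,t_2,\dots,t_s}\big[\sum_{i=1}^s\ell^*(t_i,t_{i+1}-1,\textsc{best})+\frac{35ms4^B}{4B}\sqrt n\big]$; 3. for $\textsc{mix}=\textsc{geo}$ and $\alpha=\frac{10}{7mB^2}$: $L\le\min_{s,t_2,\dots,t_s}\big[2\sum_{i=1}^s\ell^*(t_i,t_{i+1}-1,\textsc{best})+\frac{7msB^2}{5}\big]$;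 4. for $\textsc{mix}=\textsc{geo}$ and $\alpha=\frac{10/\sqrt n}{7mB^2}$: $L\le\min_{s,t_2,\dots,t_s}\big[\sum_{i=1}^s\ell^*(t_i,t_{i+1}-1,\textsc{best})+\frac{19msB^2}{10}\sqrt n\big]$.
   Context: $\mathcal{X}=\{1,\dots,N\}$, $1<N<\infty$; $m>1$. $\mathcal{P}_\varepsilon$ is the set of probability distributions on $\mathcal{X}$ assigning probability at least $\varepsilon$ to every letter. A probability matrix over $\mathcal{P}_\varepsilon$ is $\mathbf{P}=(\mathbf{p}(1)\cdots\mathbf{p}(N))$ with $\mathbf{p}(x)=(p_1(x),\dots,p_m(x))^{\mathsf T}$, $p_i\in\mathcal{P}_\varepsilon$. $\mathcal{S}=\{\mathbf{w}\in\mathbb{R}^m:\mathbf{w}\ge0,\ \sum_iw_i=1\}$. $\ell(x,p):=-\log_2p(x)$. Linear mixture: $\textsc{lin}(x;\mathbf{w},\mathbf{P}):=\mathbf{w}^{\mathsf T}\mathbf{p}(x)$; geometric mixture: $\textsc{geo}(x;\mathbf{w},\mathbf{P}):=\prod_ip_i(x)^{w_i}/\sum_{y\in\mathcal{X}}\prod_ip_i(y)^{w_i}$. Algorithm $\textsc{mix-ogd}(\mathbf{w}_1,\alpha,x^n,\mathbf{P}^n)$ for a mixture $\textsc{mix}$ with parameter space $\mathcal{W}$: for $k=1,\dots,n$ code $x_k$ with $\ell(x_k,\textsc{mix}(\mathbf{w}_k,\mathbf{P}_k))$ bits and set $\mathbf{w}_{k+1}=\mathrm{proj}(\mathbf{w}_k-\alpha\nabla_{\mathbf{w}}\ell(x_k,\textsc{mix}(\mathbf{w},\mathbf{P}_k))|_{\mathbf{w}=\mathbf{w}_k};\mathcal{W})$,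 where $\mathrm{proj}(\mathbf{v};\mathcal{W})=\arg\min_{\mathbf{w}\in\mathcal{W}}\lvert\mathbf{v}-\mathbf{w}\rvert^2$ (Euclidean). Its total code length is $\ell(x^n,\textsc{mix-ogd}(\mathbf{w}_1,\alpha,x^n,\mathbf{P}^n)):=\sum_{k=1}^n\ell(x_k,\textsc{mix}(\mathbf{w}_k,\mathbf{P}_k))$. *)

theory Defs
  imports "HOL-Analysis.Analysis"
begin

text \<open>Alphabet: {1..N}. Models are indexed by a finite type 'm with CARD('m) = m.
 A probability matrix is P :: 'm => nat => real, P i = i-th model distribution.\<close>

definition in_P_eps :: "nat \<Rightarrow> real \<Rightarrow> (nat \<Rightarrow> real) \<Rightarrow> bool" where
  "in_P_eps N eps p \<longleftrightarrow> (\<forall>x\<in>{1..N}. eps \<le> p x) \<and> (\<Sum>x=1..N. p x) = 1"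

definition prob_matrix :: "nat \<Rightarrow> real \<Rightarrow> ('m::finite \<Rightarrow> nat \<Rightarrow> real) \<Rightarrow> bool" where
  "prob_matrix N eps P \<longleftrightarrow> (\<forall>i. in_P_eps N eps (P i))"

definition codelen :: "nat \<Rightarrow> (nat \<Rightarrow> real) \<Rightarrow> real" where
  "codelen x p = - log 2 (p x)"

definition prob_simplex :: "(real^'m::finite) set" where
  "prob_simplex = {w. (\<forall>i. 0 \<le> w $ i) \<and> (\<Sum>i\<in>UNIV. w $ i) = 1}"

definition pvec :: "('m::finite \<Rightarrow> nat \<Rightarrow> real) \<Rightarrow> nat \<Rightarrow> real^'m" where
  "pvec P x = (\<chi> i. P i x)"

definition lin_mix :: "real^'m::finite \<Rightarrow> ('m \<Rightarrow> nat \<Rightarrow> real) \<Rightarrow> nat \<Rightarrow> real" where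
  "lin_mix w P = (\<lambda>x. w \<bullet> pvec P x)"

definition geo_mix :: "nat \<Rightarrow> real^'m::finite \<Rightarrow> ('m \<Rightarrow> nat \<Rightarrow> real) \<Rightarrow> nat \<Rightarrow> real" where
  "geo_mix N w P = (\<lambda>x. (\<Prod>i\<in>UNIV. P i x powr (w $ i)) /
                         (\<Sum>y=1..N. \<Prod>i\<in>UNIV. P i y powr (w $ i)))"

definition proj :: "(real^'m::finite) set \<Rightarrow> real^'m \<Rightarrow> real^'m" where
  "proj W v = (SOME w. w \<in> W \<and> (\<forall>u\<in>W. (norm (v - w))\<^sup>2 \<le> (norm (v - u))\<^sup>2))"

definition grad :: "(real^'m::finite \<Rightarrow> real) \<Rightarrow> real^'m \<Rightarrow> real^'m" where
  "grad f w = (THE D. GDERIV f w :> D)"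

text \<open>ogd_w mix W w1 alpha x P k = w_(k+1) (the weight used to code x_(k+1)).\<close>
fun ogd_w :: "(real^'m::finite \<Rightarrow> ('m \<Rightarrow> nat \<Rightarrow> real) \<Rightarrow> nat \<Rightarrow> real) \<Rightarrow> (real^'m) set \<Rightarrow>
     real^'m \<Rightarrow> real \<Rightarrow> (nat \<Rightarrow> nat) \<Rightarrow> (nat \<Rightarrow> 'm \<Rightarrow> nat \<Rightarrow> real) \<Rightarrow> nat \<Rightarrow> real^'m" where
  "ogd_w mix W w1 \<alpha> x P 0 = w1"
| "ogd_w mix W w1 \<alpha> x P (Suc k) =
     proj W (ogd_w mix W w1 \<alpha> x P k
       - \<alpha> *\<^sub>R grad (\<lambda>w. codelen (x (Suc k)) (mix w (P (Suc k)))) (ogd_w mix W w1 \<alpha> x P k))"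

definition ogd_codelen :: "(real^'m::finite \<Rightarrow> ('m \<Rightarrow> nat \<Rightarrow> real) \<Rightarrow> nat \<Rightarrow> real) \<Rightarrow> (real^'m) set \<Rightarrow>
     real^'m \<Rightarrow> real \<Rightarrow> nat \<Rightarrow> (nat \<Rightarrow> nat) \<Rightarrow> (nat \<Rightarrow> 'm \<Rightarrow> nat \<Rightarrow> real) \<Rightarrow> real" where
  "ogd_codelen mix W w1 \<alpha> n x P =
     (\<Sum>k=1..n. codelen (x k) (mix (ogd_w mix W w1 \<alpha> x P (k - 1)) (P k)))"

definition best_len :: "(nat \<Rightarrow> nat) \<Rightarrow> (nat \<Rightarrow> 'm::finite \<Rightarrow> nat \<Rightarrow> real) \<Rightarrow> nat \<Rightarrow> nat \<Rightarrow> real" where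
  "best_len x P k l = (MIN i. \<Sum>j=k..l. - log 2 (P j i (x j)))"

definition segmentation :: "nat \<Rightarrow> nat \<Rightarrow> (nat \<Rightarrow> nat) \<Rightarrow> bool" where
  "segmentation n s t \<longleftrightarrow> 1 \<le> s \<and> s \<le> n \<and> t 1 = 1 \<and> t (s + 1) = n + 1 \<and>
     (\<forall>i\<in>{1..s}. t i < t (i + 1))"

definition seg_cost :: "(nat \<Rightarrow> nat) \<Rightarrow> (nat \<Rightarrow> 'm::finite \<Rightarrow> nat \<Rightarrow> real) \<Rightarrow> nat \<Rightarrow> (nat \<Rightarrow> nat) \<Rightarrow> real" where
  "seg_cost x P s t = (\<Sum>i=1..s. best_len x P (t i) (t (i + 1) - 1))"

end

theory Submission
  imports Defs "HOL-Analysis.Harmonic_Numbers"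
begin

text \<open>
  This is Zinkevich's analysis of projected online gradient descent, run against a
  comparator that moves between segments. On a segment \<open>[t\<^sub>i, t\<^sub>i\<^sub>+\<^sub>1)\<close> compare with the vertex
  \<open>e\<^sub>j\<close> of the simplex belonging to the best model \<open>j\<close> of that segment: both mixture losses satisfy
  the tangent inequality \<open>f(w) - f(e\<^sub>j) \<le> \<langle>\<nabla>f(w), w - e\<^sub>j\<rangle>\<close> (for \<open>lin\<close> from \<open>ln z \<le> z - 1\<close>,
  for \<open>geo\<close> by convexity of log-sum-exp) and \<open>f(e\<^sub>j)\<close> is the code length of model \<open>j\<close>. Since the
  projection is nonexpansive, \<open>|w - e\<^sub>j|\<^sup>2\<close> telescopes over the segment, and it is at most 2 on the
  simplex, so every segment costs \<open>1/\<alpha>\<close> on top of \<open>\<alpha>/2 \<Sum> |\<nabla>f\<^sub>k|\<^sup>2\<close>. The gradient term is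
  controlled in two ways: by a uniform bound on \<open>|\<nabla>f|\<^sup>2\<close>, which with \<open>\<alpha> \<sim> 1/\<surd>n\<close> gives the
  \<open>\<surd>n\<close> bounds, or by the self-bounding property \<open>\<alpha> |\<nabla>f(w)|\<^sup>2 \<le> f(w)\<close>, which turns the regret
  inequality into \<open>L \<le> 2 \<cdot> cost + 2s/\<alpha>\<close>. Self-bounding uses \<open>2\<^sup>-\<^sup>B \<le> p \<le> 1 - 2\<^sup>-\<^sup>B\<close> for the
  predicted probabilities and, for \<open>lin\<close>, the elementary inequality
  \<open>8 B \<epsilon>\<^sup>2(1 - \<epsilon>)\<^sup>2 / (17 ln 2) \<le> y\<^sup>2(- ln y)\<close> on \<open>[\<epsilon>, 1 - \<epsilon>]\<close>.
\<close>

section \<open>The probability simplex and projection onto it\<close>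

lemma axis_in_prob_simplex: "axis j 1 \<in> (prob_simplex :: (real^'m::finite) set)"
  unfolding prob_simplex_def by (simp add: axis_def)

lemma closed_prob_simplex: "closed (prob_simplex :: (real^'m::finite) set)"
proof -
  have "prob_simplex = (\<Inter>i. {w::real^'m. 0 \<le> w $ i}) \<inter> {w. (\<Sum>i\<in>UNIV. w $ i) = 1}"
    unfolding prob_simplex_def by auto
  also have "closed \<dots>"
    by (intro closed_Int closed_INT ballI closed_Collect_le closed_Collect_eq continuous_intros)
  finally show ?thesis .
qed

lemma convex_prob_simplex: "convex (prob_simplex :: (real^'m::finite) set)"
  unfolding convex_def prob_simplex_def
  by (auto simp: sum.distrib sum_distrib_left[symmetric])

lemma proj_prob_simplex: "proj prob_simplex v = closest_point prob_simplex v"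
proof -
  let ?S = "prob_simplex :: (real^'m::finite) set"
  have closest_iff: "(\<forall>u\<in>?S. (norm (v - w))\<^sup>2 \<le> (norm (v - u))\<^sup>2) \<longleftrightarrow> (\<forall>u\<in>?S. dist v w \<le> dist v u)"
    for w by (simp add: dist_norm)
  have "closest_point ?S v \<in> ?S \<and> (\<forall>u\<in>?S. dist v (closest_point ?S v) \<le> dist v u)"
    using closest_point_exists[OF closed_prob_simplex] axis_in_prob_simplex by blast
  then have "proj ?S v \<in> ?S \<and> (\<forall>u\<in>?S. dist v (proj ?S v) \<le> dist v u)"
    unfolding proj_def closest_iff[symmetric] by (rule someI)
  then show ?thesis
    using closest_point_unique[OF convex_prob_simplex closed_prob_simplex] by blast
qed

lemma proj_prob_simplex_in: "proj prob_simplex v \<in> prob_simplex"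
  unfolding proj_prob_simplex
  using closest_point_in_set[OF closed_prob_simplex] axis_in_prob_simplex by blast

lemma proj_prob_simplex_nonexpansive:
  "u \<in> prob_simplex \<Longrightarrow> norm (proj prob_simplex v - u) \<le> norm (v - u)"
  using closest_point_lipschitz[OF convex_prob_simplex closed_prob_simplex, of v u]
    closest_point_self[of u] axis_in_prob_simplex
  by (auto simp: proj_prob_simplex dist_norm)

lemma prob_simplex_le_one: "w \<in> prob_simplex \<Longrightarrow> w $ i \<le> 1"
  unfolding prob_simplex_def using member_le_sum[of i UNIV "\<lambda>i. w $ i"] by auto

lemma norm_diff_axis_sq_le:
  fixes w :: "real^'m::finite"
  assumes w: "w \<in> prob_simplex"
  shows "(norm (w - axis j 1))\<^sup>2 \<le> 2"
proof -
  have "(norm (w - axis j 1))\<^sup>2 = (\<Sum>i\<in>UNIV. (w $ i - axis j 1 $ i)\<^sup>2)"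
    unfolding power2_norm_eq_inner inner_vec_def by (simp add: power2_eq_square)
  also have "\<dots> \<le> (\<Sum>i\<in>UNIV. w $ i + axis j (1::real) $ i)"
  proof (rule sum_mono)
    fix i
    have "0 \<le> w $ i" "w $ i \<le> 1" using w prob_simplex_le_one unfolding prob_simplex_def by auto
    moreover from this have "w $ i * w $ i \<le> w $ i" by (rule mult_left_le[rotated])
    ultimately show "(w $ i - axis j 1 $ i)\<^sup>2 \<le> w $ i + axis j (1::real) $ i"
      by (cases "i = j") (auto simp: axis_def power2_eq_square algebra_simps)
  qed
  also have "\<dots> = 2"
    using w axis_in_prob_simplex[of j] unfolding prob_simplex_def by (simp add: sum.distrib)
  finally show ?thesis .
qed

lemma inner_prob_simplex_bounds:
  fixes w v :: "real^'m::finite"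
  assumes w: "w \<in> prob_simplex" and "\<And>i. lo \<le> v $ i" and "\<And>i. v $ i \<le> hi"
  shows "lo \<le> inner w v" "inner w v \<le> hi"
proof -
  have w0: "\<And>i. 0 \<le> w $ i" and w1: "(\<Sum>i\<in>UNIV. w $ i) = 1"
    using w unfolding prob_simplex_def by auto
  have "(\<Sum>i\<in>UNIV. w $ i * lo) \<le> (\<Sum>i\<in>UNIV. w $ i * v $ i)"
       "(\<Sum>i\<in>UNIV. w $ i * v $ i) \<le> (\<Sum>i\<in>UNIV. w $ i * hi)"
    using w0 assms(2,3) by (auto intro!: sum_mono mult_left_mono)
  then show "lo \<le> inner w v" "inner w v \<le> hi"
    using w1 by (simp_all add: inner_vec_def sum_distrib_right[symmetric])
qed

section \<open>Segmentations\<close>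

lemma segmentation_mono:
  assumes "segmentation n s t" "1 \<le> i" "i \<le> j" "j \<le> s + 1"
  shows "t i \<le> t j"
  using assms(3,4)
proof (induction j rule: dec_induct)
  case (step j)
  then have "t j < t (j + 1)" using assms(1,2) unfolding segmentation_def by auto
  then show ?case using step by simp
qed simp

lemma segmentation_bounds:
  assumes seg: "segmentation n s t" and i: "i \<in> {1..s}"
  shows "1 \<le> t i" "t i < t (i + 1)" "t (i + 1) \<le> n + 1"
  using segmentation_mono[OF seg, of 1 i] segmentation_mono[OF seg, of "i + 1" "s + 1"] seg i
  unfolding segmentation_def by auto

lemma sum_segmentation:
  assumes seg: "segmentation n s t"
  shows "(\<Sum>k=1..n. h k) = (\<Sum>i=1..s. \<Sum>k\<in>{t i..<t (i + 1)}. h k)"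
proof -
  have "(\<Sum>k\<in>{1..<t (r + 1)}. h k) = (\<Sum>i=1..r. \<Sum>k\<in>{t i..<t (i + 1)}. h k)" if "r \<le> s" for r
    using that
  proof (induction r)
    case 0
    then show ?case using seg unfolding segmentation_def by simp
  next
    case (Suc r)
    have "1 \<le> t (r + 1)" "t (r + 1) \<le> t (Suc r + 1)"
      using segmentation_mono[OF seg, of 1 "r + 1"] segmentation_mono[OF seg, of "r + 1" "Suc r + 1"]
        seg Suc.prems unfolding segmentation_def by auto
    then show ?case
      using Suc sum.atLeastLessThan_concat[of 1 "t (r + 1)" "t (Suc r + 1)" h] by simp
  qed
  moreover have "{1..<t (s + 1)} = {1..n}" using seg unfolding segmentation_def by auto
  ultimately show ?thesis by (metis order_refl)
qed

section \<open>Tracking regret of projected online gradient descent\<close>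

lemma sum_telescope_pred:
  fixes D :: "nat \<Rightarrow> 'a::ab_group_add"
  assumes "a \<le> b"
  shows "(\<Sum>k\<in>{a..<b}. D (k - 1) - D k) = D (a - 1) - D (b - 1)"
  using assms by (induction b rule: dec_induct) auto

lemma projected_step_inner_le:
  fixes w w' g u :: "'a::real_inner"
  assumes "0 < \<alpha>" and "norm (w' - u) \<le> norm (w - \<alpha> *\<^sub>R g - u)"
  shows "inner g (w - u) \<le> ((norm (w - u))\<^sup>2 - (norm (w' - u))\<^sup>2) / (2 * \<alpha>) + \<alpha> / 2 * (norm g)\<^sup>2"
proof -
  have "(norm (w' - u))\<^sup>2 \<le> (norm (w - \<alpha> *\<^sub>R g - u))\<^sup>2"
    using assms(2) by (simp add: power_mono)
  also have "\<dots> = (norm (w - u))\<^sup>2 - 2 * \<alpha> * inner g (w - u) + \<alpha>\<^sup>2 * (norm g)\<^sup>2"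
    unfolding power2_norm_eq_inner
    by (simp add: inner_diff_left inner_diff_right inner_commute power2_eq_square algebra_simps)
  finally show ?thesis using assms(1) by (simp add: field_simps power2_eq_square)
qed

lemma projected_descent_interval_regret:
  fixes w g :: "nat \<Rightarrow> 'a::real_inner" and f :: "nat \<Rightarrow> 'a \<Rightarrow> real"
  assumes "0 < \<alpha>" and "a \<le> b"
    and step: "\<And>k. k \<in> {a..<b} \<Longrightarrow> norm (w k - u) \<le> norm (w (k - 1) - \<alpha> *\<^sub>R g k - u)"
    and lin: "\<And>k. k \<in> {a..<b} \<Longrightarrow> f k (w (k - 1)) - f k u \<le> inner (g k) (w (k - 1) - u)"
  shows "(\<Sum>k\<in>{a..<b}. f k (w (k - 1)) - f k u)
           \<le> (norm (w (a - 1) - u))\<^sup>2 / (2 * \<alpha>) + (\<Sum>k\<in>{a..<b}. \<alpha> / 2 * (norm (g k))\<^sup>2)"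
proof -
  define D where "D k = (norm (w k - u))\<^sup>2" for k
  have "(\<Sum>k\<in>{a..<b}. f k (w (k - 1)) - f k u)
          \<le> (\<Sum>k\<in>{a..<b}. (D (k - 1) - D k) / (2 * \<alpha>) + \<alpha> / 2 * (norm (g k))\<^sup>2)"
    unfolding D_def
    using lin projected_step_inner_le[OF \<open>0 < \<alpha>\<close> step] by (intro sum_mono) force
  also have "\<dots> = (D (a - 1) - D (b - 1)) / (2 * \<alpha>) + (\<Sum>k\<in>{a..<b}. \<alpha> / 2 * (norm (g k))\<^sup>2)"
    using sum_telescope_pred[OF \<open>a \<le> b\<close>, of D] by (simp add: sum.distrib sum_divide_distrib[symmetric])
  also have "\<dots> \<le> D (a - 1) / (2 * \<alpha>) + (\<Sum>k\<in>{a..<b}. \<alpha> / 2 * (norm (g k))\<^sup>2)"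
    using \<open>0 < \<alpha>\<close> by (simp add: D_def divide_right_mono)
  finally show ?thesis unfolding D_def .
qed

definition mix_loss ::
    "(real^'m::finite \<Rightarrow> ('m \<Rightarrow> nat \<Rightarrow> real) \<Rightarrow> nat \<Rightarrow> real) \<Rightarrow> (nat \<Rightarrow> nat)
       \<Rightarrow> (nat \<Rightarrow> 'm \<Rightarrow> nat \<Rightarrow> real) \<Rightarrow> nat \<Rightarrow> real^'m \<Rightarrow> real" where
  "mix_loss mix x P k = (\<lambda>w. codelen (x k) (mix w (P k)))"

lemma ogd_w_Suc_eq:
  "ogd_w mix W w1 \<alpha> x P (Suc k) =
     proj W (ogd_w mix W w1 \<alpha> x P k - \<alpha> *\<^sub>R grad (mix_loss mix x P (Suc k)) (ogd_w mix W w1 \<alpha> x P k))"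
  by (simp add: mix_loss_def)

lemma ogd_codelen_eq:
  "ogd_codelen mix W w1 \<alpha> n x P = (\<Sum>k=1..n. mix_loss mix x P k (ogd_w mix W w1 \<alpha> x P (k - 1)))"
  by (simp add: ogd_codelen_def mix_loss_def)

lemma ogd_w_in_prob_simplex:
  "w1 \<in> prob_simplex \<Longrightarrow> ogd_w mix prob_simplex w1 \<alpha> x P k \<in> prob_simplex"
  by (cases k) (auto simp: proj_prob_simplex_in)

lemma best_len_attained: "\<exists>i. best_len x P k l = (\<Sum>j=k..l. - log 2 (P j i (x j)))"
proof -
  have "best_len x P k l \<in> range (\<lambda>i. \<Sum>j=k..l. - log 2 (P j i (x j)))"
    unfolding best_len_def by (rule Min_in) auto
  then show ?thesis by auto
qed

context
  fixes mix :: "real^'m::finite \<Rightarrow> ('m \<Rightarrow> nat \<Rightarrow> real) \<Rightarrow> nat \<Rightarrow> real"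
    and x :: "nat \<Rightarrow> nat" and P :: "nat \<Rightarrow> 'm \<Rightarrow> nat \<Rightarrow> real"
    and w1 :: "real^'m" and \<alpha> :: real and n :: nat
  assumes step_size_pos: "0 < \<alpha>" and w1_in: "w1 \<in> prob_simplex"
    and loss_axis: "\<And>k j. k \<in> {1..n} \<Longrightarrow> mix_loss mix x P k (axis j 1) = - log 2 (P k j (x k))"
    and loss_linearization: "\<And>k j w. k \<in> {1..n} \<Longrightarrow> w \<in> prob_simplex \<Longrightarrow>
          mix_loss mix x P k w - mix_loss mix x P k (axis j 1)
            \<le> inner (grad (mix_loss mix x P k) w) (w - axis j 1)"
begin

abbreviation "weights \<equiv> ogd_w mix prob_simplex w1 \<alpha> x P"
abbreviation "loss \<equiv> mix_loss mix x P"

lemma ogd_segment_regret: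
  assumes "1 \<le> a" "a \<le> b" "b \<le> n + 1"
  shows "(\<Sum>k\<in>{a..<b}. loss k (weights (k - 1)))
           \<le> best_len x P a (b - 1) + 1 / \<alpha> + (\<Sum>k\<in>{a..<b}. \<alpha> / 2 * (norm (grad (loss k) (weights (k - 1))))\<^sup>2)"
proof -
  obtain j where j: "best_len x P a (b - 1) = (\<Sum>k=a..b - 1. - log 2 (P k j (x k)))"
    using best_len_attained by blast
  have ivl: "{a..b - 1} = {a..<b}" using assms by auto
  have "(\<Sum>k\<in>{a..<b}. loss k (weights (k - 1)) - loss k (axis j 1))
          \<le> (norm (weights (a - 1) - axis j 1))\<^sup>2 / (2 * \<alpha>)
             + (\<Sum>k\<in>{a..<b}. \<alpha> / 2 * (norm (grad (loss k) (weights (k - 1))))\<^sup>2)"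
  proof (rule projected_descent_interval_regret[OF step_size_pos \<open>a \<le> b\<close>])
    fix k assume "k \<in> {a..<b}"
    then have k: "k \<in> {1..n}" and "k = Suc (k - 1)" using assms by auto
    then show "norm (weights k - axis j 1)
                 \<le> norm (weights (k - 1) - \<alpha> *\<^sub>R grad (loss k) (weights (k - 1)) - axis j 1)"
      using ogd_w_Suc_eq proj_prob_simplex_nonexpansive[OF axis_in_prob_simplex] by metis
    show "loss k (weights (k - 1)) - loss k (axis j 1)
            \<le> inner (grad (loss k) (weights (k - 1))) (weights (k - 1) - axis j 1)"
      by (rule loss_linearization[OF k ogd_w_in_prob_simplex[OF w1_in]])
  qed
  also have "(norm (weights (a - 1) - axis j 1))\<^sup>2 / (2 * \<alpha>) \<le> 1 / \<alpha>"
    using norm_diff_axis_sq_le[OF ogd_w_in_prob_simplex[OF w1_in]] step_size_pos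
    by (simp add: divide_simps)
  finally have "(\<Sum>k\<in>{a..<b}. loss k (weights (k - 1))) - (\<Sum>k\<in>{a..<b}. loss k (axis j 1))
      \<le> 1 / \<alpha> + (\<Sum>k\<in>{a..<b}. \<alpha> / 2 * (norm (grad (loss k) (weights (k - 1))))\<^sup>2)"
    by (simp add: sum_subtractf)
  moreover have "(\<Sum>k\<in>{a..<b}. loss k (axis j 1)) = best_len x P a (b - 1)"
    unfolding j ivl using loss_axis assms by (intro sum.cong) auto
  ultimately show ?thesis by linarith
qed

lemma ogd_tracking_regret:
  assumes seg: "segmentation n s t"
  shows "ogd_codelen mix prob_simplex w1 \<alpha> n x P
           \<le> seg_cost x P s t + s / \<alpha> + (\<Sum>k=1..n. \<alpha> / 2 * (norm (grad (loss k) (weights (k - 1))))\<^sup>2)"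
proof -
  let ?G = "\<lambda>k. \<alpha> / 2 * (norm (grad (loss k) (weights (k - 1))))\<^sup>2"
  have "ogd_codelen mix prob_simplex w1 \<alpha> n x P = (\<Sum>i=1..s. \<Sum>k\<in>{t i..<t (i + 1)}. loss k (weights (k - 1)))"
    unfolding ogd_codelen_eq by (rule sum_segmentation[OF seg])
  also have "\<dots> \<le> (\<Sum>i=1..s. best_len x P (t i) (t (i + 1) - 1) + 1 / \<alpha> + (\<Sum>k\<in>{t i..<t (i + 1)}. ?G k))"
    using segmentation_bounds[OF seg] by (intro sum_mono ogd_segment_regret) (auto intro: less_imp_le)
  also have "\<dots> = seg_cost x P s t + s / \<alpha> + (\<Sum>k=1..n. ?G k)"
    unfolding seg_cost_def sum_segmentation[OF seg, of ?G] by (simp add: sum.distrib)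
  finally show ?thesis .
qed

lemma ogd_regret_self_bounding:
  assumes seg: "segmentation n s t"
    and self_bounding: "\<And>k w. k \<in> {1..n} \<Longrightarrow> w \<in> prob_simplex \<Longrightarrow> \<alpha> * (norm (grad (loss k) w))\<^sup>2 \<le> loss k w"
  shows "ogd_codelen mix prob_simplex w1 \<alpha> n x P \<le> 2 * seg_cost x P s t + 2 * s / \<alpha>"
proof -
  have "(\<Sum>k=1..n. \<alpha> / 2 * (norm (grad (loss k) (weights (k - 1))))\<^sup>2) \<le> (\<Sum>k=1..n. loss k (weights (k - 1)) / 2)"
    using self_bounding[OF _ ogd_w_in_prob_simplex[OF w1_in]] by (intro sum_mono) fastforce
  also have "\<dots> = ogd_codelen mix prob_simplex w1 \<alpha> n x P / 2"
    unfolding ogd_codelen_eq by (simp add: sum_divide_distrib)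
  finally show ?thesis using ogd_tracking_regret[OF seg] by simp
qed

lemma ogd_regret_bounded_gradient:
  assumes seg: "segmentation n s t"
    and bounded: "\<And>k w. k \<in> {1..n} \<Longrightarrow> w \<in> prob_simplex \<Longrightarrow> (norm (grad (loss k) w))\<^sup>2 \<le> G"
  shows "ogd_codelen mix prob_simplex w1 \<alpha> n x P \<le> seg_cost x P s t + s / \<alpha> + n * \<alpha> * G / 2"
proof -
  have "(\<Sum>k=1..n. \<alpha> / 2 * (norm (grad (loss k) (weights (k - 1))))\<^sup>2) \<le> (\<Sum>k=1..n. \<alpha> / 2 * G)"
    using bounded[OF _ ogd_w_in_prob_simplex[OF w1_in]] step_size_pos
    by (intro sum_mono mult_left_mono) auto
  then show ?thesis using ogd_tracking_regret[OF seg] by simp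
qed

end

section \<open>Code lengths of the linear and geometric mixtures\<close>

lemma grad_eqI:
  assumes "GDERIV f w :> D"
  shows "grad f w = D"
  unfolding grad_def
proof (rule the_equality)
  fix D' assume "GDERIV f w :> D'"
  then have "(\<lambda>h. inner h D') = (\<lambda>h. inner h D)"
    using assms unfolding gderiv_def by (rule has_derivative_unique)
  then have "inner (D' - D) D' = inner (D' - D) D" by meson
  then have "inner (D' - D) (D' - D) = 0" by (simp add: inner_diff_right)
  then show "D' = D" by simp
qed fact

lemma GDERIV_inner: "GDERIV (\<lambda>w. inner w p) w :> p"
  unfolding gderiv_def by (auto intro!: derivative_eq_intros)

lemma GDERIV_sum:
  assumes "finite Y" "\<And>y. y \<in> Y \<Longrightarrow> GDERIV (h y) w :> d y"
  shows "GDERIV (\<lambda>w. \<Sum>y\<in>Y. h y w) w :> (\<Sum>y\<in>Y. d y)"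
  using assms by (induction Y rule: finite_induct) (auto intro: GDERIV_add simp: GDERIV_const)

lemma in_P_eps_bounds:
  assumes p: "in_P_eps N \<epsilon> p" and "0 \<le> \<epsilon>" and N: "1 < N" and x: "x \<in> {1..N}"
  shows "\<epsilon> \<le> p x" "p x \<le> 1 - \<epsilon>"
proof -
  show "\<epsilon> \<le> p x" using p x unfolding in_P_eps_def by auto
  define x' :: nat where "x' = (if x = 1 then 2 else 1)"
  have x': "x' \<in> {1..N} - {x}" using N x unfolding x'_def by auto
  have "(\<Sum>z=1..N. p z) = p x + (\<Sum>z\<in>{1..N} - {x}. p z)"
    using x by (simp add: sum.remove)
  moreover have "p x' \<le> (\<Sum>z\<in>{1..N} - {x}. p z)"
    using x' p \<open>0 \<le> \<epsilon>\<close> unfolding in_P_eps_def by (intro member_le_sum) (auto intro: order_trans)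
  moreover have "\<epsilon> \<le> p x'" using p x' unfolding in_P_eps_def by auto
  ultimately show "p x \<le> 1 - \<epsilon>" using p unfolding in_P_eps_def by linarith
qed

lemma lin_mix_axis: "lin_mix (axis j 1) Pk x = Pk j x"
  by (simp add: lin_mix_def pvec_def inner_axis')

definition log_column :: "('m::finite \<Rightarrow> nat \<Rightarrow> real) \<Rightarrow> nat \<Rightarrow> real^'m" where
  "log_column Pk y = (\<chi> i. ln (Pk i y))"

definition geo_partition :: "nat \<Rightarrow> ('m::finite \<Rightarrow> nat \<Rightarrow> real) \<Rightarrow> real^'m \<Rightarrow> real" where
  "geo_partition N Pk w = (\<Sum>y=1..N. exp (w \<bullet> log_column Pk y))"

context
  fixes N :: nat and \<epsilon> :: real and Pk :: "'m::finite \<Rightarrow> nat \<Rightarrow> real" and xk :: nat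
  assumes Pk: "prob_matrix N \<epsilon> Pk" and eps_pos: "0 < \<epsilon>" and N: "1 < N" and xk: "xk \<in> {1..N}"
begin

lemma prob_matrix_bounds: "y \<in> {1..N} \<Longrightarrow> \<epsilon> \<le> Pk i y" "y \<in> {1..N} \<Longrightarrow> Pk i y \<le> 1 - \<epsilon>"
  using in_P_eps_bounds[of N \<epsilon> "Pk i"] Pk eps_pos N unfolding prob_matrix_def by auto

lemma prob_matrix_pos: "y \<in> {1..N} \<Longrightarrow> 0 < Pk i y"
  using prob_matrix_bounds eps_pos by (meson less_le_trans)

lemma lin_mix_bounds:
  assumes "w \<in> prob_simplex"
  shows "\<epsilon> \<le> lin_mix w Pk xk" "lin_mix w Pk xk \<le> 1 - \<epsilon>"
  unfolding lin_mix_def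
  using inner_prob_simplex_bounds[OF assms, of \<epsilon> "pvec Pk xk" "1 - \<epsilon>"] prob_matrix_bounds[OF xk]
  by (auto simp: pvec_def)

lemma lin_loss_grad:
  assumes "w \<in> prob_simplex"
  shows "grad (\<lambda>v. codelen xk (lin_mix v Pk)) w = (- 1 / (ln 2 * lin_mix w Pk xk)) *\<^sub>R pvec Pk xk"
proof (rule grad_eqI)
  have "0 < lin_mix w Pk xk" using lin_mix_bounds[OF assms] eps_pos by linarith
  then have "DERIV (\<lambda>y. - log 2 y) (w \<bullet> pvec Pk xk) :> - 1 / (ln 2 * (w \<bullet> pvec Pk xk))"
    unfolding lin_mix_def by (auto intro!: derivative_eq_intros simp: field_simps)
  from GDERIV_DERIV_compose[OF GDERIV_inner this]
  show "GDERIV (\<lambda>v. codelen xk (lin_mix v Pk)) w :> (- 1 / (ln 2 * lin_mix w Pk xk)) *\<^sub>R pvec Pk xk"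
    by (simp add: codelen_def lin_mix_def)
qed

lemma lin_loss_linearization:
  assumes w: "w \<in> prob_simplex"
  shows "codelen xk (lin_mix w Pk) - codelen xk (lin_mix (axis j 1) Pk)
           \<le> inner (grad (\<lambda>v. codelen xk (lin_mix v Pk)) w) (w - axis j 1)"
proof -
  define y z where "y = lin_mix w Pk xk" and "z = Pk j xk"
  have "0 < y" "0 < z"
    using lin_mix_bounds[OF w] eps_pos prob_matrix_pos[OF xk] unfolding y_def z_def by auto
  have "codelen xk (lin_mix w Pk) - codelen xk (lin_mix (axis j 1) Pk) = ln (z / y) / ln 2"
    using \<open>0 < y\<close> \<open>0 < z\<close>
    by (simp add: y_def z_def codelen_def lin_mix_axis log_def ln_div diff_divide_distrib)
  also have "\<dots> \<le> (z / y - 1) / ln 2"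
    using \<open>0 < y\<close> \<open>0 < z\<close> by (intro divide_right_mono ln_le_minus_one) auto
  also have "\<dots> = inner (grad (\<lambda>v. codelen xk (lin_mix v Pk)) w) (w - axis j 1)"
    using \<open>0 < y\<close> unfolding lin_loss_grad[OF w]
    by (simp add: y_def z_def lin_mix_def pvec_def inner_diff_right inner_axis' inner_commute field_simps)
  finally show ?thesis .
qed

lemma lin_loss_grad_norm:
  assumes w: "w \<in> prob_simplex"
  shows "(norm (grad (\<lambda>v. codelen xk (lin_mix v Pk)) w))\<^sup>2 \<le> CARD('m) * (1 - \<epsilon>)\<^sup>2 / (ln 2 * lin_mix w Pk xk)\<^sup>2"
proof -
  have "(norm (pvec Pk xk))\<^sup>2 = (\<Sum>i\<in>UNIV. (Pk i xk)\<^sup>2)"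
    unfolding power2_norm_eq_inner inner_vec_def by (simp add: pvec_def power2_eq_square)
  also have "\<dots> \<le> (\<Sum>i\<in>(UNIV::'m set). (1 - \<epsilon>)\<^sup>2)"
    using prob_matrix_bounds[OF xk] prob_matrix_pos[OF xk] by (intro sum_mono power_mono) (auto simp: less_imp_le)
  finally have "(norm (pvec Pk xk))\<^sup>2 \<le> CARD('m) * (1 - \<epsilon>)\<^sup>2" by simp
  then show ?thesis
    unfolding lin_loss_grad[OF w] by (simp add: power_divide power_mult_distrib divide_right_mono)
qed

lemma geo_mix_softmax:
  assumes "y \<in> {1..N}"
  shows "geo_mix N w Pk y = exp (w \<bullet> log_column Pk y) / geo_partition N Pk w"
proof -
  have prod_eq: "(\<Prod>i\<in>UNIV. Pk i y powr (w $ i)) = exp (w \<bullet> log_column Pk y)" if "y \<in> {1..N}" for y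
    using prob_matrix_pos[OF that, THEN order_less_imp_not_eq2]
    by (simp add: powr_def exp_sum inner_vec_def log_column_def mult.commute)
  have "(\<Sum>y=1..N. \<Prod>i\<in>UNIV. Pk i y powr (w $ i)) = geo_partition N Pk w"
    unfolding geo_partition_def by (intro sum.cong) (auto simp: prod_eq)
  then show ?thesis
    unfolding geo_mix_def prod_eq[OF assms] by simp
qed

lemma geo_partition_pos: "0 < geo_partition N Pk w"
  unfolding geo_partition_def using N by (intro sum_pos) auto

lemma geo_mix_pos: "y \<in> {1..N} \<Longrightarrow> 0 < geo_mix N w Pk y"
  using geo_partition_pos by (simp add: geo_mix_softmax)

lemma sum_geo_mix: "(\<Sum>y=1..N. geo_mix N w Pk y) = 1"
  using geo_partition_pos[of w] by (simp add: geo_mix_softmax sum_divide_distrib[symmetric] geo_partition_def)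

lemma geo_mix_le_one: "y \<in> {1..N} \<Longrightarrow> geo_mix N w Pk y \<le> 1"
  using member_le_sum[of y "{1..N}" "geo_mix N w Pk"] sum_geo_mix geo_mix_pos by (simp add: less_imp_le)

lemma geo_loss_eq:
  "codelen xk (geo_mix N w Pk) = (ln (geo_partition N Pk w) - w \<bullet> log_column Pk xk) / ln 2"
  using geo_partition_pos[of w] prob_matrix_pos
  by (simp add: codelen_def geo_mix_softmax[OF xk] log_def ln_div diff_divide_distrib)

lemma geo_loss_axis: "codelen xk (geo_mix N (axis j 1) Pk) = - log 2 (Pk j xk)"
proof -
  have "geo_partition N Pk (axis j 1) = 1"
    using Pk prob_matrix_pos unfolding geo_partition_def prob_matrix_def in_P_eps_def
    by (simp add: log_column_def inner_axis')
  then show ?thesis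
    using prob_matrix_pos[OF xk] by (simp add: geo_loss_eq log_column_def inner_axis' log_def)
qed

lemma geo_loss_grad:
  "grad (\<lambda>v. codelen xk (geo_mix N v Pk)) w
     = (1 / ln 2) *\<^sub>R ((\<Sum>y=1..N. geo_mix N w Pk y *\<^sub>R log_column Pk y) - log_column Pk xk)"
proof (rule grad_eqI)
  let ?Z = "geo_partition N Pk"
  have "GDERIV ?Z w :> (\<Sum>y=1..N. exp (w \<bullet> log_column Pk y) *\<^sub>R log_column Pk y)"
    unfolding geo_partition_def
    by (rule GDERIV_sum) (auto intro: GDERIV_DERIV_compose[OF GDERIV_inner DERIV_exp])
  from GDERIV_DERIV_compose[OF this DERIV_ln[OF geo_partition_pos]]
  have "GDERIV (\<lambda>v. ln (?Z v)) w :> (\<Sum>y=1..N. geo_mix N w Pk y *\<^sub>R log_column Pk y)"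
    by (simp add: geo_mix_softmax scaleR_sum_right divide_inverse_commute mult.commute
        del: atLeastAtMost_iff cong: sum.cong)
  from GDERIV_mult[OF GDERIV_const GDERIV_diff[OF this GDERIV_inner], of "1 / ln 2"]
  show "GDERIV (\<lambda>v. codelen xk (geo_mix N v Pk)) w
          :> (1 / ln 2) *\<^sub>R ((\<Sum>y=1..N. geo_mix N w Pk y *\<^sub>R log_column Pk y) - log_column Pk xk)"
    by (simp add: geo_loss_eq)
qed

text \<open>As a function of the weights the loss is a log-sum-exp minus a linear function; the tangent
  inequality is Jensen's inequality for \<open>exp\<close> with the softmax weights \<open>geo_mix N w Pk\<close>.\<close>

lemma geo_loss_linearization:
  "codelen xk (geo_mix N w Pk) - codelen xk (geo_mix N u Pk)
     \<le> inner (grad (\<lambda>v. codelen xk (geo_mix N v Pk)) w) (w - u)"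
proof -
  let ?Z = "geo_partition N Pk" and ?q = "\<lambda>y. geo_mix N w Pk y"
  define D where "D y = log_column Pk y \<bullet> (u - w)" for y
  have "exp (u \<bullet> log_column Pk y) = exp (w \<bullet> log_column Pk y) * exp (D y)" for y
    unfolding D_def exp_add[symmetric] by (simp add: inner_diff_right inner_commute[of _ u] inner_commute[of _ w])
  then have "?Z u = (\<Sum>y=1..N. exp (w \<bullet> log_column Pk y) * exp (D y))"
    unfolding geo_partition_def by simp
  also have "\<dots> = ?Z w * (\<Sum>y=1..N. ?q y * exp (D y))"
    unfolding sum_distrib_left using geo_partition_pos[of w, THEN order_less_imp_not_eq2]
    by (intro sum.cong) (auto simp: geo_mix_softmax)
  finally have Z_u: "?Z u = ?Z w * (\<Sum>y=1..N. ?q y * exp (D y))" .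
  have pos: "0 < (\<Sum>y=1..N. ?q y * exp (D y))"
    using geo_mix_pos N by (intro sum_pos) auto
  have "exp (\<Sum>y=1..N. ?q y * D y) \<le> (\<Sum>y=1..N. ?q y * exp (D y))"
    using convex_on_sum[OF _ _ exp_convex sum_geo_mix, where y = D] geo_mix_pos N by (simp add: less_imp_le)
  then have "(\<Sum>y=1..N. ?q y * D y) \<le> ln (\<Sum>y=1..N. ?q y * exp (D y))"
    using pos by (simp add: ln_ge_iff)
  also have "\<dots> = ln (?Z u) - ln (?Z w)"
    using Z_u pos geo_partition_pos[of w] by (simp add: ln_mult)
  finally have "ln (?Z w) - ln (?Z u) - log_column Pk xk \<bullet> (w - u)
      \<le> (\<Sum>y=1..N. ?q y * (log_column Pk y \<bullet> (w - u))) - log_column Pk xk \<bullet> (w - u)"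
    by (simp add: D_def inner_diff_right sum_subtractf right_diff_distrib)
  then have "(ln (?Z w) - ln (?Z u) - log_column Pk xk \<bullet> (w - u)) / ln 2
      \<le> ((\<Sum>y=1..N. ?q y * (log_column Pk y \<bullet> (w - u))) - log_column Pk xk \<bullet> (w - u)) / ln 2"
    by (simp add: divide_right_mono)
  then show ?thesis
    unfolding geo_loss_grad unfolding geo_loss_eq
    by (simp add: inner_diff_left inner_diff_right inner_sum_left inner_sum_right inner_commute
        sum_subtractf right_diff_distrib diff_divide_distrib)
qed

lemma geo_loss_grad_component:
  "\<bar>grad (\<lambda>v. codelen xk (geo_mix N v Pk)) w $ i\<bar> \<le> - log 2 \<epsilon> * (1 - geo_mix N w Pk xk)"
proof -
  let ?q = "\<lambda>y. geo_mix N w Pk y" and ?Y = "{1..N} - {xk}"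
  define c where "c y = ln (Pk i y)" for y
  have c_diff: "\<bar>c y - c xk\<bar> \<le> - ln \<epsilon>" if "y \<in> {1..N}" for y
  proof -
    have "ln \<epsilon> \<le> c z \<and> c z \<le> 0" if "z \<in> {1..N}" for z
      using prob_matrix_bounds[OF that, of i] prob_matrix_pos[OF that, of i] eps_pos
      unfolding c_def by simp
    from this[OF that] this[OF xk] show ?thesis by linarith
  qed
  have grad_i: "grad (\<lambda>v. codelen xk (geo_mix N v Pk)) w $ i = (\<Sum>y=1..N. ?q y * (c y - c xk)) / ln 2"
    unfolding geo_loss_grad using sum_geo_mix[of w]
    by (simp add: log_column_def c_def sum_component right_diff_distrib sum_subtractf
        sum_distrib_right[symmetric] diff_divide_distrib)
  have "\<bar>\<Sum>y=1..N. ?q y * (c y - c xk)\<bar> \<le> (\<Sum>y\<in>?Y. ?q y * (- ln \<epsilon>))"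
  proof -
    have "\<bar>\<Sum>y=1..N. ?q y * (c y - c xk)\<bar> \<le> (\<Sum>y\<in>?Y. \<bar>?q y * (c y - c xk)\<bar>)"
      using sum_abs[of "\<lambda>y. ?q y * (c y - c xk)" "{1..N}"] xk by (simp add: sum.remove)
    also have "\<dots> \<le> (\<Sum>y\<in>?Y. ?q y * (- ln \<epsilon>))"
    proof (rule sum_mono)
      fix y assume "y \<in> ?Y"
      then show "\<bar>?q y * (c y - c xk)\<bar> \<le> ?q y * (- ln \<epsilon>)"
        using c_diff[of y] geo_mix_pos[of y w] mult_left_mono[of "\<bar>c y - c xk\<bar>" "- ln \<epsilon>" "?q y"]
        by (simp add: abs_mult)
    qed
    finally show ?thesis .
  qed
  moreover have "(\<Sum>y\<in>?Y. ?q y) = 1 - ?q xk"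
    using sum_geo_mix[of w] xk by (simp add: sum_diff1)
  then have "(\<Sum>y\<in>?Y. ?q y * (- ln \<epsilon>)) = (1 - ?q xk) * (- ln \<epsilon>)"
    by (metis sum_distrib_right)
  ultimately have "\<bar>\<Sum>y=1..N. ?q y * (c y - c xk)\<bar> / ln 2 \<le> (1 - ?q xk) * (- ln \<epsilon>) / ln 2"
    by (intro divide_right_mono) auto
  then show ?thesis
    unfolding grad_i by (simp add: log_def abs_divide mult.commute)
qed

lemma geo_loss_grad_norm:
  "(norm (grad (\<lambda>v. codelen xk (geo_mix N v Pk)) w))\<^sup>2
     \<le> CARD('m) * (log 2 \<epsilon>)\<^sup>2 * (1 - geo_mix N w Pk xk)\<^sup>2"
proof -
  let ?g = "grad (\<lambda>v. codelen xk (geo_mix N v Pk)) w"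
  have "(norm ?g)\<^sup>2 = (\<Sum>i\<in>UNIV. \<bar>?g $ i\<bar>\<^sup>2)"
    unfolding power2_norm_eq_inner inner_vec_def by (simp add: power2_eq_square)
  also have "\<dots> \<le> (\<Sum>i\<in>(UNIV::'m set). (- log 2 \<epsilon> * (1 - geo_mix N w Pk xk))\<^sup>2)"
    using geo_loss_grad_component by (intro sum_mono power_mono) auto
  finally show ?thesis by (simp add: power_mult_distrib)
qed

end

section \<open>Elementary inequalities\<close>

lemma ln2_ge_0_6865: "0.6865 \<le> ln (2::real)"
proof -
  have "(1/2::real) \<le> (1 + (-0.6865) / real (40::nat)) ^ 40"
    by (simp add: power_divide)
  also have "\<dots> \<le> exp (-0.6865)"
    by (rule exp_ge_one_plus_x_over_n_power_n) auto
  finally have "ln (1/2) \<le> ln (exp (-0.6865::real))" by (subst ln_le_cancel_iff) auto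
  then show ?thesis by (simp add: ln_div)
qed

lemma ln2_sq_ge: "8 / 17 \<le> (ln (2::real))\<^sup>2"
proof -
  have "(0.6865::real)\<^sup>2 \<le> (ln 2)\<^sup>2" using ln2_ge_0_6865 by (intro power_mono) auto
  then show ?thesis by (simp add: power2_eq_square)
qed

lemma mult_neg_ln_le_half:
  fixes z :: real
  assumes "0 < z"
  shows "z * - ln z \<le> 1 / 2"
proof -
  have "ln (1 / (2 * z)) \<le> 1 / (2 * z) - 1" using assms by (intro ln_le_minus_one) auto
  then have "- ln z \<le> 1 / (2 * z) - 1 + ln 2" using assms by (simp add: ln_div ln_mult)
  also have "\<dots> \<le> 1 / (2 * z)" using ln2_le_25_over_36 by simp
  finally show ?thesis using assms by (simp add: field_simps)
qed

text \<open>\<open>y\<^sup>2 (- ln y)\<close> is increasing on \<open>(0, 1/2]\<close>; we compare with the endpoint \<open>\<epsilon>\<close> through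
  \<open>y = r \<epsilon>\<close> with \<open>r \<ge> 1\<close>.\<close>

lemma sq_mult_neg_ln_mono:
  fixes \<epsilon> y :: real
  assumes e: "0 < \<epsilon>" and ey: "\<epsilon> \<le> y" and y: "y \<le> 1/2"
  shows "\<epsilon>\<^sup>2 * - ln \<epsilon> \<le> y\<^sup>2 * - ln y"
proof -
  define r L where "r = y / \<epsilon>" and "L = - ln \<epsilon>"
  have r: "1 \<le> r" and yr: "y = r * \<epsilon>" using e ey unfolding r_def by auto
  have ln_y: "ln y = ln r + ln \<epsilon>" using e r unfolding yr by (simp add: ln_mult)
  have "ln y \<le> ln (1/2)" using e ey y by simp
  then have L_ge: "ln r + ln 2 \<le> L" unfolding L_def ln_y by (simp add: ln_div)
  have r_sq: "0 \<le> r\<^sup>2 - 1" using r by (simp add: one_le_power)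
  have "r - 1 \<le> (r\<^sup>2 - 1) * (1/2)"
    using zero_le_power2[of "r - 1"] by (simp add: power2_eq_square algebra_simps)
  also have "\<dots> \<le> (r\<^sup>2 - 1) * ln 2"
    using r_sq ln2_ge_two_thirds by (intro mult_left_mono) auto
  finally have "r\<^sup>2 * ln r \<le> (r\<^sup>2 - 1) * L"
    using ln_le_minus_one[of r] r mult_left_mono[OF L_ge r_sq] by (simp add: algebra_simps)
  then have "\<epsilon>\<^sup>2 * L \<le> \<epsilon>\<^sup>2 * (r\<^sup>2 * (L - ln r))"
    by (intro mult_left_mono) (auto simp: algebra_simps)
  also have "\<dots> = y\<^sup>2 * - ln y"
    unfolding ln_y L_def unfolding yr by (simp add: power_mult_distrib algebra_simps)
  finally show ?thesis unfolding L_def .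
qed

lemma mult_one_minus_sq_le:
  fixes \<epsilon> y :: real
  assumes e: "0 < \<epsilon>" "\<epsilon> \<le> 1/2" and y: "1/2 \<le> y" "y \<le> 1 - \<epsilon>"
  shows "\<epsilon> * (1 - \<epsilon>)\<^sup>2 / 2 \<le> y\<^sup>2 * (1 - y)"
proof -
  define d where "d = 1 - y"
  have d: "\<epsilon> \<le> d" "d \<le> 1/2" and y_eq: "y = 1 - d" using y unfolding d_def by auto
  consider "d \<le> 1/3" | "1/3 < d" by linarith
  then show ?thesis
  proof cases
    case 1
    text \<open>\<open>d (1 - d)\<^sup>2 - \<epsilon> (1 - \<epsilon>)\<^sup>2\<close> factors as \<open>(d - \<epsilon>) ((1 - d - \<epsilon>)\<^sup>2 - d \<epsilon>)\<close>.\<close>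
    have "d * \<epsilon> \<le> (1/3) * (1/3)" using 1 d e by (intro mult_mono) auto
    also have "\<dots> \<le> (1 - d - \<epsilon>) * (1 - d - \<epsilon>)" using 1 d e by (intro mult_mono) auto
    finally have "0 \<le> (d - \<epsilon>) * ((1 - d - \<epsilon>)\<^sup>2 - d * \<epsilon>)"
      using d by (simp add: power2_eq_square)
    also have "\<dots> = d * (1 - d)\<^sup>2 - \<epsilon> * (1 - \<epsilon>)\<^sup>2"
      by (simp add: power2_eq_square algebra_simps)
    finally have "\<epsilon> * (1 - \<epsilon>)\<^sup>2 \<le> d * (1 - d)\<^sup>2" by simp
    moreover have "0 \<le> \<epsilon> * (1 - \<epsilon>)\<^sup>2" using e by simp
    moreover have "(1 - d)\<^sup>2 * (1 - (1 - d)) = d * (1 - d)\<^sup>2" by simp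
    ultimately show ?thesis unfolding y_eq by linarith
  next
    case 2
    text \<open>Here both sides are compared with constants: \<open>\<epsilon> (1 - \<epsilon>)\<^sup>2 \<le> 4/27\<close>, the maximum of
      \<open>t (1 - t)\<^sup>2\<close>, while \<open>(1 - d)\<^sup>2 d \<ge> 1/12\<close> on \<open>[1/3, 1/2]\<close>.\<close>
    have "0 \<le> (\<epsilon> - 1/3)\<^sup>2 * (4/3 - \<epsilon>)" using e by simp
    then have "\<epsilon> * (1 - \<epsilon>)\<^sup>2 \<le> 4/27" by (simp add: power2_eq_square algebra_simps)
    moreover have "(1/3) * (1/2 * (1/2)) \<le> d * ((1 - d) * (1 - d))"
      using 2 d by (intro mult_mono) auto
    then have "1/12 \<le> d * (1 - d)\<^sup>2" by (simp add: power2_eq_square)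
    moreover have "(1 - d)\<^sup>2 * (1 - (1 - d)) = d * (1 - d)\<^sup>2" by simp
    ultimately show ?thesis unfolding y_eq by linarith
  qed
qed

lemma lin_self_bounding_ineq:
  fixes \<epsilon> y :: real
  assumes e: "0 < \<epsilon>" "\<epsilon> \<le> 1/2" and y: "\<epsilon> \<le> y" "y \<le> 1 - \<epsilon>"
  shows "8 * - ln \<epsilon> * \<epsilon>\<^sup>2 * (1 - \<epsilon>)\<^sup>2 / (17 * (ln 2)\<^sup>2) \<le> y\<^sup>2 * - ln y"
proof -
  define c :: real where "c = 8 / (17 * (ln 2)\<^sup>2)"
  have c: "0 \<le> c" "c \<le> 1" using ln2_sq_ge unfolding c_def by (auto simp: field_simps)
  have L: "0 \<le> - ln \<epsilon>" "0 \<le> \<epsilon> * - ln \<epsilon>" "0 \<le> \<epsilon>\<^sup>2 * - ln \<epsilon>" using e by (simp_all add: mult_nonneg_nonpos)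
  have q: "0 \<le> (1 - \<epsilon>)\<^sup>2" "(1 - \<epsilon>)\<^sup>2 \<le> 1" using e by (auto simp: power_le_one)
  have lhs: "8 * - ln \<epsilon> * \<epsilon>\<^sup>2 * (1 - \<epsilon>)\<^sup>2 / (17 * (ln 2)\<^sup>2) = c * (\<epsilon>\<^sup>2 * - ln \<epsilon>) * (1 - \<epsilon>)\<^sup>2"
    unfolding c_def by simp
  consider "y \<le> 1/2" | "1/2 < y" by linarith
  then show ?thesis
  proof cases
    case 1
    have "c * (\<epsilon>\<^sup>2 * - ln \<epsilon>) * (1 - \<epsilon>)\<^sup>2 \<le> 1 * (\<epsilon>\<^sup>2 * - ln \<epsilon>) * 1"
      using c L q by (intro mult_mono) auto
    also have "\<dots> \<le> y\<^sup>2 * - ln y" using sq_mult_neg_ln_mono[OF e(1) y(1) 1] by simp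
    finally show ?thesis unfolding lhs .
  next
    case 2
    have "c * (\<epsilon> * - ln \<epsilon>) \<le> 1 * (1/2)"
      using c mult_neg_ln_le_half[OF e(1)] e L by (intro mult_mono) auto
    then have "(c * (\<epsilon> * - ln \<epsilon>)) * (\<epsilon> * (1 - \<epsilon>)\<^sup>2) \<le> (1/2) * (\<epsilon> * (1 - \<epsilon>)\<^sup>2)"
      using e by (intro mult_right_mono) auto
    moreover have "c * (\<epsilon>\<^sup>2 * - ln \<epsilon>) * (1 - \<epsilon>)\<^sup>2 = (c * (\<epsilon> * - ln \<epsilon>)) * (\<epsilon> * (1 - \<epsilon>)\<^sup>2)"
      by (simp add: power2_eq_square algebra_simps)
    ultimately have "c * (\<epsilon>\<^sup>2 * - ln \<epsilon>) * (1 - \<epsilon>)\<^sup>2 \<le> \<epsilon> * (1 - \<epsilon>)\<^sup>2 / 2" by linarith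
    also have "\<dots> \<le> y\<^sup>2 * (1 - y)" using mult_one_minus_sq_le[OF e] 2 y by simp
    also have "\<dots> \<le> y\<^sup>2 * - ln y"
      using ln_le_minus_one[of y] 2 by (intro mult_left_mono) auto
    finally show ?thesis unfolding lhs .
  qed
qed

section \<open>The four step sizes\<close>

lemma two_powr_neg_bounds:
  fixes B :: real
  assumes B: "1 \<le> B"
  shows "0 < 2 powr - B" "2 powr - B \<le> 1/2" "4 powr B = 1 / (2 powr - B)\<^sup>2" "B\<^sup>2 \<le> 4 powr B"
proof -
  show pos: "0 < 2 powr - B" by simp
  have "2 powr - B \<le> 2 powr (- 1)" using B by (intro powr_mono) auto
  then show "2 powr - B \<le> 1/2" by (simp add: powr_minus)
  have four: "4 powr B = (2 powr B)\<^sup>2"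
    by (simp add: power2_eq_square powr_add[symmetric] powr_powr[symmetric])
  then show "4 powr B = 1 / (2 powr - B)\<^sup>2" by (simp add: powr_minus power_inverse divide_inverse)
  have "2 powr - B * (B * ln 2) \<le> 1/2"
    using mult_neg_ln_le_half[OF pos] by (simp add: ln_powr)
  moreover have "2 powr - B * (B * (1/2)) \<le> 2 powr - B * (B * ln 2)"
    using ln2_ge_two_thirds B by (intro mult_left_mono) auto
  ultimately have "B \<le> 2 powr B" by (simp add: powr_minus field_simps)
  then show "B\<^sup>2 \<le> 4 powr B" unfolding four using B by (intro power_mono) auto
qed

context
  fixes B :: real and N :: nat and Pk :: "'m::finite \<Rightarrow> nat \<Rightarrow> real" and xk :: nat
  assumes B: "1 \<le> B" and Pk: "prob_matrix N (2 powr - B) Pk" and N: "1 < N" and xk: "xk \<in> {1..N}"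
begin

lemma lin_loss_self_bounding:
  assumes w: "w \<in> prob_simplex"
  shows "8 * B / (17 * CARD('m) * 4 powr B) * (norm (grad (\<lambda>v. codelen xk (lin_mix v Pk)) w))\<^sup>2
           \<le> codelen xk (lin_mix w Pk)"
proof -
  define \<epsilon> y where "\<epsilon> = 2 powr - B" and "y = lin_mix w Pk xk"
  note eps = two_powr_neg_bounds[OF B, folded \<epsilon>_def]
  note y = lin_mix_bounds[OF Pk[folded \<epsilon>_def] eps(1) N xk w, folded y_def]
  have "0 < y" using y eps by linarith
  have ln_eps: "ln \<epsilon> = - B * ln 2" unfolding \<epsilon>_def by (simp add: ln_powr)
  have "8 * B / (17 * CARD('m) * 4 powr B) * (norm (grad (\<lambda>v. codelen xk (lin_mix v Pk)) w))\<^sup>2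
          \<le> 8 * B / (17 * CARD('m) * 4 powr B) * (CARD('m) * (1 - \<epsilon>)\<^sup>2 / (ln 2 * y)\<^sup>2)"
    using lin_loss_grad_norm[OF Pk[folded \<epsilon>_def] eps(1) N xk w] B
    unfolding y_def by (intro mult_left_mono) auto
  also have "\<dots> = (8 * - ln \<epsilon> * \<epsilon>\<^sup>2 * (1 - \<epsilon>)\<^sup>2 / (17 * (ln 2)\<^sup>2)) / (ln 2 * y\<^sup>2)"
    unfolding ln_eps eps(3) using eps(1) \<open>0 < y\<close> by (simp add: field_simps power2_eq_square)
  also have "\<dots> \<le> y\<^sup>2 * - ln y / (ln 2 * y\<^sup>2)"
    using lin_self_bounding_ineq[OF eps(1,2) y] by (intro divide_right_mono) auto
  also have "\<dots> = codelen xk (lin_mix w Pk)"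
    using \<open>0 < y\<close> unfolding y_def by (simp add: codelen_def log_def)
  finally show ?thesis .
qed

lemma lin_loss_grad_bounded:
  assumes w: "w \<in> prob_simplex"
  shows "(norm (grad (\<lambda>v. codelen xk (lin_mix v Pk)) w))\<^sup>2 \<le> CARD('m) * 4 powr B / (ln 2)\<^sup>2"
proof -
  define \<epsilon> y where "\<epsilon> = 2 powr - B" and "y = lin_mix w Pk xk"
  note eps = two_powr_neg_bounds[OF B, folded \<epsilon>_def]
  note y = lin_mix_bounds[OF Pk[folded \<epsilon>_def] eps(1) N xk w, folded y_def]
  have "CARD('m) * (1 - \<epsilon>)\<^sup>2 / (ln 2 * y)\<^sup>2 \<le> CARD('m) * 1 / (ln 2 * \<epsilon>)\<^sup>2"
    using eps y by (intro frac_le mult_left_mono power_mono) (auto simp: power_le_one)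
  also have "\<dots> = CARD('m) * 4 powr B / (ln 2)\<^sup>2"
    unfolding eps(3) by (simp add: power_mult_distrib)
  finally show ?thesis
    using lin_loss_grad_norm[OF Pk[folded \<epsilon>_def] eps(1) N xk w] unfolding y_def by linarith
qed

lemma geo_loss_grad_norm_le:
  "(norm (grad (\<lambda>v. codelen xk (geo_mix N v Pk)) w))\<^sup>2 \<le> CARD('m) * B\<^sup>2 * (1 - geo_mix N w Pk xk)\<^sup>2"
  using geo_loss_grad_norm[OF Pk two_powr_neg_bounds(1)[OF B] N xk] by simp

lemma geo_loss_grad_bounded:
  "(norm (grad (\<lambda>v. codelen xk (geo_mix N v Pk)) w))\<^sup>2 \<le> CARD('m) * B\<^sup>2"
proof -
  have "(1 - geo_mix N w Pk xk)\<^sup>2 \<le> 1"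
    using geo_mix_pos[OF Pk two_powr_neg_bounds(1)[OF B] N xk xk, of w]
      geo_mix_le_one[OF Pk two_powr_neg_bounds(1)[OF B] N xk xk, of w]
    by (intro power_le_one) auto
  then have "CARD('m) * B\<^sup>2 * (1 - geo_mix N w Pk xk)\<^sup>2 \<le> CARD('m) * B\<^sup>2 * 1"
    by (intro mult_left_mono) auto
  then show ?thesis using geo_loss_grad_norm_le[of w] by linarith
qed

lemma geo_loss_self_bounding:
  "10 / (7 * CARD('m) * B\<^sup>2) * (norm (grad (\<lambda>v. codelen xk (geo_mix N v Pk)) w))\<^sup>2
     \<le> codelen xk (geo_mix N w Pk)"
proof -
  define q where "q = geo_mix N w Pk xk"
  have q: "0 < q" "q \<le> 1"
    using geo_mix_pos[OF Pk two_powr_neg_bounds(1)[OF B] N xk xk]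
      geo_mix_le_one[OF Pk two_powr_neg_bounds(1)[OF B] N xk xk]
    unfolding q_def by auto
  have "10 / (7 * CARD('m) * B\<^sup>2) * (norm (grad (\<lambda>v. codelen xk (geo_mix N v Pk)) w))\<^sup>2
          \<le> 10 / (7 * CARD('m) * B\<^sup>2) * (CARD('m) * B\<^sup>2 * (1 - q)\<^sup>2)"
    using geo_loss_grad_norm_le unfolding q_def by (intro mult_left_mono) auto
  also have "\<dots> = 10 / 7 * (1 - q)\<^sup>2" using B by simp
  also have "\<dots> \<le> 10 / 7 * (1 - q)"
    using q mult_left_le[of "1 - q" "1 - q"] by (simp add: power2_eq_square)
  also have "\<dots> \<le> 10 / 7 * - ln q"
    using ln_le_minus_one[of q] q by simp
  also have "\<dots> \<le> 1 / ln 2 * - ln q"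
    using ln2_le_25_over_36 q by (intro mult_right_mono) (auto simp: field_simps)
  also have "\<dots> = codelen xk (geo_mix N w Pk)"
    unfolding q_def codelen_def log_def by simp
  finally show ?thesis .
qed

end

lemma mix_loss_lin_mix_axis: "mix_loss lin_mix x P k (axis j 1) = - log 2 (P k j (x k))"
  by (simp add: mix_loss_def codelen_def lin_mix_axis)

context
  fixes N n :: nat and B :: real and x :: "nat \<Rightarrow> nat"
    and P :: "nat \<Rightarrow> 'm::finite \<Rightarrow> nat \<Rightarrow> real" and w1 :: "real^'m"
  assumes N: "1 < N" and B: "1 \<le> B" and X: "\<forall>k\<in>{1..n}. x k \<in> {1..N}"
    and PM: "\<forall>k\<in>{1..n}. prob_matrix N (2 powr - B) (P k)" and w1: "w1 \<in> prob_simplex"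
begin

lemma mix_loss_lin_mix_linearization:
  "k \<in> {1..n} \<Longrightarrow> w \<in> prob_simplex \<Longrightarrow>
     mix_loss lin_mix x P k w - mix_loss lin_mix x P k (axis j 1)
       \<le> inner (grad (mix_loss lin_mix x P k) w) (w - axis j 1)"
  using lin_loss_linearization[OF PM[rule_format] two_powr_neg_bounds(1)[OF B] N X[rule_format]]
  by (simp add: mix_loss_def)

lemma mix_loss_geo_mix_axis:
  "k \<in> {1..n} \<Longrightarrow> mix_loss (geo_mix N) x P k (axis j 1) = - log 2 (P k j (x k))"
  using geo_loss_axis[OF PM[rule_format] two_powr_neg_bounds(1)[OF B] N X[rule_format]]
  by (simp add: mix_loss_def)

lemma mix_loss_geo_mix_linearization:
  "k \<in> {1..n} \<Longrightarrow> w \<in> prob_simplex \<Longrightarrow>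
     mix_loss (geo_mix N) x P k w - mix_loss (geo_mix N) x P k (axis j 1)
       \<le> inner (grad (mix_loss (geo_mix N) x P k) w) (w - axis j 1)"
  using geo_loss_linearization[OF PM[rule_format] two_powr_neg_bounds(1)[OF B] N X[rule_format]]
  by (simp add: mix_loss_def)

lemma ogd_lin_mix_const_step_size:
  assumes seg: "segmentation n s t"
  shows "ogd_codelen lin_mix prob_simplex w1 (8 * B / (17 * CARD('m) * 4 powr B)) n x P
           \<le> 2 * seg_cost x P s t + 17 * CARD('m) * s * 4 powr B / (4 * B)"
proof -
  let ?\<alpha> = "8 * B / (17 * CARD('m) * 4 powr B)"
  have "0 < ?\<alpha>" using B by simp
  have "ogd_codelen lin_mix prob_simplex w1 ?\<alpha> n x P \<le> 2 * seg_cost x P s t + 2 * real s / ?\<alpha>"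
    using lin_loss_self_bounding[OF B PM[rule_format] N X[rule_format]]
    by (intro ogd_regret_self_bounding[OF \<open>0 < ?\<alpha>\<close> w1 mix_loss_lin_mix_axis
          mix_loss_lin_mix_linearization seg]) (auto simp: mix_loss_def)
  also have "2 * real s / ?\<alpha> = 17 * CARD('m) * s * 4 powr B / (4 * B)"
    using B by (simp add: field_simps)
  finally show ?thesis .
qed

lemma ogd_lin_mix_sqrt_step_size:
  assumes seg: "segmentation n s t" and n: "1 \<le> n"
  shows "ogd_codelen lin_mix prob_simplex w1 ((8 * B / sqrt n) / (17 * CARD('m) * 4 powr B)) n x P
           \<le> seg_cost x P s t + 35 * CARD('m) * s * 4 powr B / (4 * B) * sqrt n"
proof -
  let ?\<alpha> = "(8 * B / sqrt n) / (17 * CARD('m) * 4 powr B)" and ?m = "real CARD('m)"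
  have "0 < ?\<alpha>" using B n by simp
  have "ogd_codelen lin_mix prob_simplex w1 ?\<alpha> n x P
          \<le> seg_cost x P s t + s / ?\<alpha> + n * ?\<alpha> * (?m * 4 powr B / (ln 2)\<^sup>2) / 2"
    using lin_loss_grad_bounded[OF B PM[rule_format] N X[rule_format]]
    by (intro ogd_regret_bounded_gradient[OF \<open>0 < ?\<alpha>\<close> w1 mix_loss_lin_mix_axis
          mix_loss_lin_mix_linearization seg]) (auto simp: mix_loss_def)
  also have "n * ?\<alpha> * (?m * 4 powr B / (ln 2)\<^sup>2) / 2 = 4 * B * (n / sqrt n) / (17 * (ln 2)\<^sup>2)"
    by (simp add: field_simps)
  also have "\<dots> = 4 * B * sqrt n / (17 * (ln 2)\<^sup>2)"
    by (simp add: real_div_sqrt)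
  also have "\<dots> \<le> B * sqrt n / 2"
    using ln2_sq_ge B by (simp add: field_simps mult_left_mono)
  also have "\<dots> \<le> ?m * s * 4 powr B * sqrt n / (2 * B)"
  proof -
    have "1 * 1 \<le> ?m * s" using seg unfolding segmentation_def by (intro mult_mono) auto
    have "B\<^sup>2 \<le> 1 * 4 powr B" using two_powr_neg_bounds(4)[OF B] by simp
    also have "\<dots> \<le> (?m * s) * 4 powr B"
      using \<open>1 * 1 \<le> ?m * s\<close> by (intro mult_right_mono) auto
    finally have "B\<^sup>2 * sqrt n \<le> ?m * s * 4 powr B * sqrt n" by (intro mult_right_mono) auto
    then show ?thesis using B by (simp add: field_simps power2_eq_square)
  qed
  also have "s / ?\<alpha> = 17 * ?m * s * 4 powr B * sqrt n / (8 * B)"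
    using B n by (simp add: field_simps)
  finally have "ogd_codelen lin_mix prob_simplex w1 ?\<alpha> n x P
      \<le> seg_cost x P s t + 21 / 8 * (?m * s * 4 powr B * sqrt n / B)"
    by (simp add: field_simps)
  also have "\<dots> \<le> seg_cost x P s t + 35 / 4 * (?m * s * 4 powr B * sqrt n / B)"
    using B by (intro add_left_mono mult_right_mono) auto
  finally show ?thesis by (simp add: field_simps)
qed

lemma ogd_geo_mix_const_step_size:
  assumes seg: "segmentation n s t"
  shows "ogd_codelen (geo_mix N) prob_simplex w1 (10 / (7 * CARD('m) * B\<^sup>2)) n x P
           \<le> 2 * seg_cost x P s t + 7 * CARD('m) * s * B\<^sup>2 / 5"
proof -
  let ?\<alpha> = "10 / (7 * CARD('m) * B\<^sup>2)"
  have "0 < ?\<alpha>" using B by simp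
  have "ogd_codelen (geo_mix N) prob_simplex w1 ?\<alpha> n x P \<le> 2 * seg_cost x P s t + 2 * real s / ?\<alpha>"
    using geo_loss_self_bounding[OF B PM[rule_format] N X[rule_format]]
    by (intro ogd_regret_self_bounding[OF \<open>0 < ?\<alpha>\<close> w1 mix_loss_geo_mix_axis
          mix_loss_geo_mix_linearization seg]) (auto simp: mix_loss_def)
  also have "2 * real s / ?\<alpha> = 7 * CARD('m) * s * B\<^sup>2 / 5"
    using B by (simp add: field_simps)
  finally show ?thesis .
qed

lemma ogd_geo_mix_sqrt_step_size:
  assumes seg: "segmentation n s t" and n: "1 \<le> n"
  shows "ogd_codelen (geo_mix N) prob_simplex w1 ((10 / sqrt n) / (7 * CARD('m) * B\<^sup>2)) n x P
           \<le> seg_cost x P s t + 19 * CARD('m) * s * B\<^sup>2 / 10 * sqrt n"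
proof -
  let ?\<alpha> = "(10 / sqrt n) / (7 * CARD('m) * B\<^sup>2)" and ?m = "real CARD('m)"
  have "0 < ?\<alpha>" using B n by simp
  have "ogd_codelen (geo_mix N) prob_simplex w1 ?\<alpha> n x P
          \<le> seg_cost x P s t + s / ?\<alpha> + n * ?\<alpha> * (?m * B\<^sup>2) / 2"
    using geo_loss_grad_bounded[OF B PM[rule_format] N X[rule_format]]
    by (intro ogd_regret_bounded_gradient[OF \<open>0 < ?\<alpha>\<close> w1 mix_loss_geo_mix_axis
          mix_loss_geo_mix_linearization seg]) (auto simp: mix_loss_def)
  also have "n * ?\<alpha> * (?m * B\<^sup>2) / 2 = 5 / 7 * (n / sqrt n)"
    using B by (simp add: field_simps)
  also have "\<dots> \<le> 12 / 10 * (?m * s * B\<^sup>2 * sqrt n)"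
  proof -
    have "1 * 1 \<le> ?m * s" using seg unfolding segmentation_def by (intro mult_mono) auto
    then have "1 * 1 \<le> ?m * s * B\<^sup>2" using B by (intro mult_mono) (auto simp: one_le_power)
    then have "1 * sqrt n \<le> ?m * s * B\<^sup>2 * sqrt n" by (intro mult_right_mono) auto
    moreover have "real n / sqrt n = sqrt n" by (simp add: real_div_sqrt)
    ultimately show ?thesis using real_sqrt_ge_zero[of n] by linarith
  qed
  also have "s / ?\<alpha> = 7 / 10 * (?m * s * B\<^sup>2 * sqrt n)"
    using B n by (simp add: field_simps)
  finally show ?thesis by (simp add: field_simps)
qed

end

theorem theorem2:
  fixes N n :: nat and B \<alpha> :: real and x :: "nat \<Rightarrow> nat"
    and P :: "nat \<Rightarrow> 'm::finite \<Rightarrow> nat \<Rightarrow> real" and w1 :: "real^'m"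
  assumes "1 < N" and "1 < CARD('m)" and "1 \<le> B" and "1 \<le> n"
    and "\<forall>k\<in>{1..n}. x k \<in> {1..N}"
    and "\<forall>k\<in>{1..n}. prob_matrix N (2 powr (- B)) (P k)"
    and "w1 \<in> prob_simplex"
  shows
   "(\<forall>s t. segmentation n s t \<longrightarrow>
       ogd_codelen lin_mix prob_simplex w1 (8 * B / (17 * CARD('m) * 4 powr B)) n x P
         \<le> 2 * seg_cost x P s t + 17 * CARD('m) * s * 4 powr B / (4 * B))
  \<and> (\<forall>s t. segmentation n s t \<longrightarrow>
       ogd_codelen lin_mix prob_simplex w1 ((8 * B / sqrt n) / (17 * CARD('m) * 4 powr B)) n x P
         \<le> seg_cost x P s t + 35 * CARD('m) * s * 4 powr B / (4 * B) * sqrt n)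
  \<and> (\<forall>s t. segmentation n s t \<longrightarrow>
       ogd_codelen (geo_mix N) prob_simplex w1 (10 / (7 * CARD('m) * B\<^sup>2)) n x P
         \<le> 2 * seg_cost x P s t + 7 * CARD('m) * s * B\<^sup>2 / 5)
  \<and> (\<forall>s t. segmentation n s t \<longrightarrow>
       ogd_codelen (geo_mix N) prob_simplex w1 ((10 / sqrt n) / (7 * CARD('m) * B\<^sup>2)) n x P
         \<le> seg_cost x P s t + 19 * CARD('m) * s * B\<^sup>2 / 10 * sqrt n)"
  using ogd_lin_mix_const_step_size[OF assms(1,3,5,6,7)] ogd_lin_mix_sqrt_step_size[OF assms(1,3,5,6,7) _ assms(4)]
    ogd_geo_mix_const_step_size[OF assms(1,3,5,6,7)] ogd_geo_mix_sqrt_step_size[OF assms(1,3,5,6,7) _ assms(4)]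
  by blast

end
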